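(* Let $\Sigma=\mathbb{S}^{n-1}\times\mathbb{R}\subset\mathbb{R}^{n+1}$ be a self-shrinker, with $x_n$ the coordinate on the $\mathbb{R}$ factor. For each $a\in[0,\sqrt2)$, the region $\{x_n>a\}\subset\Sigma$ is unstable. Moreover, for each such $a$ there exists $b_a>a$ such that the region $\{a<x_n<b\}\subset\Sigma$ is unstable for every $b>b_a$.
   Context: $\mathbb{S}^{n-1}$ is the round sphere of radius $\sqrt{2(n-1)}$ centered at the origin of $\mathbb{R}^n$. Stability operator: $Lf=\Delta f-\tfrac12\langle\vec x,\nabla f\rangle+(|A|^2+\tfrac12)f$. A region $\Omega$ is stable if there exists a function $u$ with $Lu=0$ and $u>0$ on $\Omega$; it is unstable otherwise. For a bounded region, instability means $L$ has a negative Dirichlet eigenvalue there (eigenvalue convention $Lu=-\lambda u$). *)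

theory Defs
  imports "HOL-Analysis.Analysis"
begin

text \<open>Ambient space R^(n+1) = R^n x R, with R^n modelled by a euclidean space 'a,
  n = DIM('a). The last coordinate x_n is snd.\<close>

definition cyl_rad :: "'a::euclidean_space itself \<Rightarrow> real" where
  "cyl_rad T = sqrt (2 * (real DIM('a) - 1))"

definition cyl :: "('a::euclidean_space \<times> real) set" where
  "cyl = {p. norm (fst p) = cyl_rad TYPE('a)}"

text \<open>|A|^2 of the cylinder: principal curvatures 1/r (multiplicity n-1) and 0.\<close>
definition cyl_A2 :: "'a::euclidean_space itself \<Rightarrow> real" where
  "cyl_A2 T = (real DIM('a) - 1) / (cyl_rad T)^2"

text \<open>Extension of a function on Sigma constant along rays from the axis (0-homogeneous in y).
  For such an extension, the Euclidean Laplacian at a point of Sigma equals the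
  Laplace-Beltrami operator of Sigma, and the Euclidean gradient is the tangential gradient.\<close>
definition cyl_ext :: "('a::euclidean_space \<times> real \<Rightarrow> real) \<Rightarrow> ('a \<times> real \<Rightarrow> real)" where
  "cyl_ext u = (\<lambda>(y, z). u ((cyl_rad TYPE('a) / norm y) *\<^sub>R y, z))"

definition D1 :: "('b::euclidean_space \<Rightarrow> real) \<Rightarrow> 'b \<Rightarrow> 'b \<Rightarrow> real" where
  "D1 f v x = frechet_derivative f (at x) v"

definition D2 :: "('b::euclidean_space \<Rightarrow> real) \<Rightarrow> 'b \<Rightarrow> 'b \<Rightarrow> 'b \<Rightarrow> real" where
  "D2 f v w x = frechet_derivative (\<lambda>x. D1 f v x) (at x) w"

definition C2_on :: "'b::euclidean_space set \<Rightarrow> ('b \<Rightarrow> real) \<Rightarrow> bool" where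
  "C2_on U f \<longleftrightarrow> f differentiable_on U \<and>
     (\<forall>v\<in>Basis. (\<lambda>x. D1 f v x) differentiable_on U \<and>
        (\<forall>w\<in>Basis. continuous_on U (D2 f v w)))"

definition laplacian :: "('b::euclidean_space \<Rightarrow> real) \<Rightarrow> 'b \<Rightarrow> real" where
  "laplacian f x = (\<Sum>b\<in>Basis. D2 f b b x)"

definition stab_op :: "('a::euclidean_space \<times> real \<Rightarrow> real) \<Rightarrow> 'a \<times> real \<Rightarrow> real" where
  "stab_op u p = laplacian (cyl_ext u) p - (1/2) * D1 (cyl_ext u) p p
                 + (cyl_A2 TYPE('a) + 1/2) * u p"

definition cyl_cone :: "('a::euclidean_space \<times> real) set \<Rightarrow> ('a \<times> real) set" where
  "cyl_cone \<Omega> = {(y, z). y \<noteq> 0 \<and> ((cyl_rad TYPE('a) / norm y) *\<^sub>R y, z) \<in> \<Omega>}"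

definition stable_region :: "('a::euclidean_space \<times> real) set \<Rightarrow> bool" where
  "stable_region \<Omega> \<longleftrightarrow> (\<exists>u. C2_on (cyl_cone \<Omega>) (cyl_ext u) \<and>
      (\<forall>p\<in>\<Omega>. u p > 0 \<and> stab_op u p = 0))"

end

theory Submission
  imports Defs
begin

text \<open>Since n = DIM('a) \<ge> 2 the cylinder has |A|^2 = 1/2, so on functions of x_n alone
  the stability operator is the ODE operator \<phi>'' - z \<phi>'/2 + \<phi>. The cubic
  \<phi>(z) = (z^2 - c^2)(d - z) vanishes at z = c and z = d, is positive in between, and
  satisfies \<phi>'' - z \<phi>'/2 + \<phi> > 0 there as soon as d (2 - c^2) > 8. If u > 0 solved L u = 0
  on a region containing the strip c \<le> x_n \<le> d, the largest t with t \<phi> \<le> u on the strip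
  would make u - t \<phi> attain the value 0 as an interior minimum, where the maximum principle
  gives 0 = L u \<ge> t L \<phi> > 0. The bound a < sqrt 2 is what allows a < c and
  d (2 - c^2) > 8 with both regions of the statement containing that strip.\<close>

lemma has_real_derivative_along_line:
  fixes G :: "'b::euclidean_space \<Rightarrow> real"
  assumes "G differentiable (at (p + s *\<^sub>R v))"
  shows "((\<lambda>s. G (p + s *\<^sub>R v)) has_real_derivative D1 G v (p + s *\<^sub>R v)) (at s)"
proof -
  let ?G' = "frechet_derivative G (at (p + s *\<^sub>R v))"
  have G: "(G has_derivative ?G') (at (p + s *\<^sub>R v))"
    using assms frechet_derivative_works by blast
  have line: "((\<lambda>s. p + s *\<^sub>R v) has_derivative (\<lambda>h. h *\<^sub>R v)) (at s)"
    by (auto intro!: derivative_eq_intros)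
  have "(\<lambda>h. ?G' (h *\<^sub>R v)) = (*) (?G' v)"
    using has_derivative_linear[OF G] by (auto simp: linear_scale mult.commute)
  then show ?thesis
    using has_derivative_compose[OF line G]
    by (simp add: has_field_derivative_def D1_def)
qed

lemma local_min_second_derivative_nonneg:
  fixes H H1 :: "real \<Rightarrow> real"
  assumes "\<delta> > 0" and deriv: "\<And>s. \<bar>s\<bar> < \<delta> \<Longrightarrow> (H has_real_derivative H1 s) (at s)"
    and deriv2: "(H1 has_real_derivative H2) (at 0)"
    and min: "\<And>s. \<bar>s\<bar> < \<delta> \<Longrightarrow> H 0 \<le> H s"
  shows "H2 \<ge> 0"
proof (rule ccontr)
  assume "\<not> H2 \<ge> 0"
  have H1_0: "H1 0 = 0"
    by (rule DERIV_local_min[OF deriv[of 0] \<open>\<delta> > 0\<close>]) (use assms(1) min in auto)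
  have "((\<lambda>y. (H1 y - H1 0) / (y - 0)) \<longlongrightarrow> H2) (at 0)"
    using deriv2 has_field_derivative_iff by fastforce
  then have "((\<lambda>y. H1 y / y) \<longlongrightarrow> H2) (at_right 0)"
    using H1_0 by (simp add: filterlim_at_split)
  then have "eventually (\<lambda>y. H1 y / y < 0) (at_right 0)"
    using \<open>\<not> H2 \<ge> 0\<close> order_tendstoD(2) by force
  then obtain \<eta> where "\<eta> > 0" and neg: "\<And>y. 0 < y \<Longrightarrow> y < \<eta> \<Longrightarrow> H1 y / y < 0"
    unfolding eventually_at_right_field by auto
  define s where "s = min \<eta> \<delta> / 2"
  have s: "0 < s" "s < \<eta>" "s < \<delta>"
    using \<open>\<eta> > 0\<close> \<open>\<delta> > 0\<close> by (auto simp: s_def)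
  obtain y where y: "0 < y" "y < s" "H s - H 0 = s * H1 y"
    using MVT2[OF s(1), of H H1] deriv s by force
  have "H1 y < 0"
    using neg[of y] y s by (simp add: divide_less_0_iff)
  then have "s * H1 y < 0"
    using s(1) by (simp add: mult_pos_neg)
  then have "H s < H 0"
    using y(3) by simp
  with min[of s] s show False by simp
qed

lemma exists_line_segment_in_ball:
  fixes p v :: "'b::real_normed_vector"
  assumes "\<epsilon> > 0"
  shows "\<exists>\<delta>>0. \<forall>s. \<bar>s\<bar> < \<delta> \<longrightarrow> p + s *\<^sub>R v \<in> ball p \<epsilon>"
proof (intro exI[of _ "\<epsilon> / (norm v + 1)"] conjI allI impI)
  have nv: "norm v + 1 > 0"
    by (simp add: add_nonneg_pos)
  then show "\<epsilon> / (norm v + 1) > 0"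
    using assms by simp
  fix s :: real
  assume "\<bar>s\<bar> < \<epsilon> / (norm v + 1)"
  then have "\<bar>s\<bar> * (norm v + 1) < \<epsilon>"
    using nv by (simp add: pos_less_divide_eq)
  moreover have "dist p (p + s *\<^sub>R v) \<le> \<bar>s\<bar> * (norm v + 1)"
    by (simp add: dist_norm mult_left_mono)
  ultimately show "p + s *\<^sub>R v \<in> ball p \<epsilon>"
    by simp
qed

lemma local_min_minus_profile_derivatives:
  fixes F :: "('a::euclidean_space \<times> real) \<Rightarrow> real"
  assumes diff: "\<forall>x\<in>ball p \<epsilon>. F differentiable (at x)" and "\<epsilon> > 0"
    and min: "\<forall>q\<in>ball p \<epsilon>. F p - \<psi> (snd p) \<le> F q - \<psi> (snd q)"
    and \<psi>1: "\<And>z. (\<psi> has_real_derivative \<psi>1 z) (at z)"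
    and \<psi>2: "\<And>z. (\<psi>1 has_real_derivative \<psi>2 z) (at z)"
  shows "D1 F v p = \<psi>1 (snd p) * snd v"
    and "(\<lambda>x. D1 F v x) differentiable (at p) \<Longrightarrow> \<psi>2 (snd p) * (snd v)\<^sup>2 \<le> D2 F v v p"
proof -
  obtain \<delta> where "\<delta> > 0" and near: "\<And>s. \<bar>s\<bar> < \<delta> \<Longrightarrow> p + s *\<^sub>R v \<in> ball p \<epsilon>"
    using exists_line_segment_in_ball[OF \<open>\<epsilon> > 0\<close>] by blast
  define H where "H s = F (p + s *\<^sub>R v) - \<psi> (snd p + s * snd v)" for s
  define H1 where "H1 s = D1 F v (p + s *\<^sub>R v) - \<psi>1 (snd p + s * snd v) * snd v" for s
  have \<psi>_line: "((\<lambda>s. \<psi> (snd p + s * snd v)) has_real_derivative \<psi>1 (snd p + s * snd v) * snd v) (at s)"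
    for s by (rule DERIV_chain2[OF \<psi>1]) (auto intro!: derivative_eq_intros)
  have \<psi>1_line: "((\<lambda>s. \<psi>1 (snd p + s * snd v)) has_real_derivative \<psi>2 (snd p + s * snd v) * snd v) (at s)"
    for s by (rule DERIV_chain2[OF \<psi>2]) (auto intro!: derivative_eq_intros)
  have H_deriv: "(H has_real_derivative H1 s) (at s)" if "\<bar>s\<bar> < \<delta>" for s
  proof -
    have "F differentiable (at (p + s *\<^sub>R v))"
      using diff near[OF that] by blast
    from DERIV_diff[OF has_real_derivative_along_line[OF this] \<psi>_line]
    show ?thesis unfolding H_def[abs_def] H1_def by simp
  qed
  have H_min: "H 0 \<le> H s" if "\<bar>s\<bar> < \<delta>" for s
    using min near[OF that] by (auto simp: H_def dest!: bspec[of _ _ "p + s *\<^sub>R v"])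
  have "H1 0 = 0"
    by (rule DERIV_local_min[OF H_deriv[of 0] \<open>\<delta> > 0\<close>]) (use \<open>\<delta> > 0\<close> H_min in auto)
  then show "D1 F v p = \<psi>1 (snd p) * snd v"
    by (simp add: H1_def)
  assume "(\<lambda>x. D1 F v x) differentiable (at p)"
  from has_real_derivative_along_line[of "\<lambda>x. D1 F v x" p 0 v] this
  have "((\<lambda>s. D1 F v (p + s *\<^sub>R v)) has_real_derivative D2 F v v p) (at 0)"
    by (simp add: D1_def D2_def)
  from DERIV_diff[OF this DERIV_cmult_right[OF \<psi>1_line, of "snd v"]]
  have "(H1 has_real_derivative D2 F v v p - \<psi>2 (snd p) * (snd v)\<^sup>2) (at 0)"
    unfolding H1_def[abs_def] by (simp add: power2_eq_square mult_ac)
  from local_min_second_derivative_nonneg[OF \<open>\<delta> > 0\<close> H_deriv this H_min]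
  show "\<psi>2 (snd p) * (snd v)\<^sup>2 \<le> D2 F v v p"
    by simp
qed

lemma sum_Basis_snd_power2: "(\<Sum>b\<in>(Basis::('a::euclidean_space \<times> real) set). (snd b)\<^sup>2) = 1"
proof -
  have "inner ((0::'a), (1::real)) (0, 1) =
      (\<Sum>b\<in>Basis. inner ((0::'a), (1::real)) b * inner ((0::'a), (1::real)) b)"
    by (rule euclidean_inner)
  then show ?thesis
    by (simp add: inner_prod_def power2_eq_square)
qed

lemma stab_op_ge_at_local_min:
  fixes u :: "'a::euclidean_space \<times> real \<Rightarrow> real"
  assumes "DIM('a) \<ge> 2" "open U" "p \<in> U" and C2: "C2_on U (cyl_ext u)" and "\<epsilon> > 0"
    and min: "\<forall>q\<in>ball p \<epsilon>. cyl_ext u p - \<psi> (snd p) \<le> cyl_ext u q - \<psi> (snd q)"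
    and \<psi>1: "\<And>z. (\<psi> has_real_derivative \<psi>1 z) (at z)"
    and \<psi>2: "\<And>z. (\<psi>1 has_real_derivative \<psi>2 z) (at z)"
  shows "\<psi>2 (snd p) - snd p * \<psi>1 (snd p) / 2 + u p \<le> stab_op u p"
proof -
  define F where "F = cyl_ext u"
  have diff: "\<forall>x\<in>U. F differentiable (at x)"
    and diff_D1: "\<forall>v\<in>Basis. \<forall>x\<in>U. (\<lambda>x. D1 F v x) differentiable (at x)"
    using C2 differentiable_on_eq_differentiable_at[OF \<open>open U\<close>]
    unfolding C2_on_def F_def by blast+
  obtain e where "e > 0" "ball p e \<subseteq> U"
    using \<open>open U\<close> \<open>p \<in> U\<close> open_contains_ball by blast
  have "\<forall>x\<in>ball p (min \<epsilon> e). F differentiable (at x)"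
    using diff \<open>ball p e \<subseteq> U\<close> by auto
  moreover have "min \<epsilon> e > 0"
    using \<open>\<epsilon> > 0\<close> \<open>e > 0\<close> by simp
  moreover have "\<forall>q\<in>ball p (min \<epsilon> e). F p - \<psi> (snd p) \<le> F q - \<psi> (snd q)"
    using min by (simp add: F_def)
  ultimately have derivs:
      "\<And>v. D1 F v p = \<psi>1 (snd p) * snd v"
      "\<And>v. (\<lambda>x. D1 F v x) differentiable (at p) \<Longrightarrow> \<psi>2 (snd p) * (snd v)\<^sup>2 \<le> D2 F v v p"
    using local_min_minus_profile_derivatives[OF _ _ _ \<psi>1 \<psi>2] by blast+
  have "(\<Sum>b\<in>(Basis::('a \<times> real) set). \<psi>2 (snd p) * (snd b)\<^sup>2) \<le> laplacian F p"
    unfolding laplacian_def using derivs(2) diff_D1 \<open>p \<in> U\<close> by (intro sum_mono) auto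
  then have "\<psi>2 (snd p) \<le> laplacian F p"
    by (simp add: sum_distrib_left[symmetric] sum_Basis_snd_power2)
  moreover have A2: "cyl_A2 TYPE('a) = 1/2"
    using assms(1) by (simp add: cyl_A2_def cyl_rad_def)
  ultimately show ?thesis
    using derivs(1)[of p] unfolding stab_op_def F_def[symmetric] A2 by (simp add: mult.commute)
qed

lemma mem_cyl_iff: "p \<in> cyl \<longleftrightarrow> norm (fst p) = cyl_rad TYPE('a)"
  for p :: "'a::euclidean_space \<times> real"
  by (simp add: cyl_def)

lemma cyl_rad_pos: "DIM('a::euclidean_space) \<ge> 2 \<Longrightarrow> cyl_rad TYPE('a) > 0"
  by (simp add: cyl_rad_def)

lemma cyl_ext_eq: "p \<in> cyl \<Longrightarrow> cyl_ext u p = u p"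
  by (cases p) (auto simp: cyl_ext_def mem_cyl_iff)

lemma radial_projection_in_cyl:
  "y \<noteq> 0 \<Longrightarrow> ((cyl_rad TYPE('a) / norm y) *\<^sub>R y, z) \<in> (cyl :: ('a::euclidean_space \<times> real) set)"
  by (simp add: mem_cyl_iff cyl_rad_def)

lemma cyl_cone_memI:
  fixes p :: "'a::euclidean_space \<times> real"
  assumes "DIM('a) \<ge> 2" "p \<in> cyl" "p \<in> \<Omega>"
  shows "p \<in> cyl_cone \<Omega>"
  using assms cyl_rad_pos[OF assms(1)] by (cases p) (auto simp: cyl_cone_def mem_cyl_iff)

lemma compact_cyl_strip: "compact {q \<in> (cyl :: ('a::euclidean_space \<times> real) set). c \<le> snd q \<and> snd q \<le> d}"
proof -
  let ?r = "cyl_rad TYPE('a)"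
  have "{q \<in> (cyl :: ('a \<times> real) set). c \<le> snd q \<and> snd q \<le> d} =
      (cball 0 ?r \<times> {c..d}) \<inter> {q. norm (fst q) = ?r}"
    by (auto simp: mem_cyl_iff)
  also have "compact \<dots>"
    by (intro compact_Int_closed compact_Times compact_cball compact_Icc closed_Collect_eq
        continuous_intros)
  finally show ?thesis .
qed

lemma cyl_ext_local_min:
  fixes u :: "'a::euclidean_space \<times> real \<Rightarrow> real"
  assumes "DIM('a) \<ge> 2" "open I" "p \<in> cyl" "snd p \<in> I"
    and min: "\<forall>q\<in>cyl. snd q \<in> I \<longrightarrow> u p - \<psi> (snd p) \<le> u q - \<psi> (snd q)"
  shows "\<exists>\<epsilon>>0. \<forall>q\<in>ball p \<epsilon>. cyl_ext u p - \<psi> (snd p) \<le> cyl_ext u q - \<psi> (snd q)"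
proof -
  obtain e where "e > 0" "ball (snd p) e \<subseteq> I"
    using assms(2,4) openE by blast
  define r where "r = cyl_rad TYPE('a)"
  have "r > 0"
    using cyl_rad_pos[OF assms(1)] by (simp add: r_def)
  show ?thesis
  proof (intro exI[of _ "min r e"] conjI ballI)
    show "min r e > 0"
      using \<open>r > 0\<close> \<open>e > 0\<close> by simp
    fix q assume "q \<in> ball p (min r e)"
    then have close: "dist (fst p) (fst q) < r" "dist (snd p) (snd q) < e"
      using dist_fst_le[of p q] dist_snd_le[of p q] by auto
    obtain y z where q: "q = (y, z)"
      by fastforce
    have "y \<noteq> 0"
      using close(1) \<open>p \<in> cyl\<close> by (auto simp: q mem_cyl_iff r_def)
    have "z \<in> I"
      using close(2) \<open>ball (snd p) e \<subseteq> I\<close> by (auto simp: q)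
    have "cyl_ext u q = u ((r / norm y) *\<^sub>R y, z)"
      by (simp add: q cyl_ext_def r_def)
    then show "cyl_ext u p - \<psi> (snd p) \<le> cyl_ext u q - \<psi> (snd q)"
      using min radial_projection_in_cyl[OF \<open>y \<noteq> 0\<close>, of z] \<open>z \<in> I\<close> cyl_ext_eq[OF \<open>p \<in> cyl\<close>]
      by (auto simp: q r_def)
  qed
qed

lemma exists_largest_multiple_below:
  fixes F \<psi> :: "'b::topological_space \<Rightarrow> real"
  assumes "compact K" "continuous_on K F" "continuous_on K \<psi>"
    and F_pos: "\<forall>q\<in>K. F q > 0" and "q1 \<in> K" "\<psi> q1 > 0"
  shows "\<exists>t>0. \<exists>q0\<in>K. \<psi> q0 > 0 \<and> F q0 = t * \<psi> q0 \<and> (\<forall>q\<in>K. t * \<psi> q \<le> F q)"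
proof -
  have "continuous_on K (\<lambda>q. \<psi> q / F q)"
    using assms by (intro continuous_on_divide) auto
  then obtain q0 where "q0 \<in> K" and max: "\<forall>q\<in>K. \<psi> q / F q \<le> \<psi> q0 / F q0"
    using continuous_attains_sup[OF \<open>compact K\<close>] \<open>q1 \<in> K\<close> by blast
  define M where "M = \<psi> q0 / F q0"
  have "M > 0"
    using max \<open>q1 \<in> K\<close> \<open>\<psi> q1 > 0\<close> F_pos
    by (metis M_def divide_pos_pos order_less_le_trans)
  have "F q0 > 0"
    using F_pos \<open>q0 \<in> K\<close> by blast
  show ?thesis
  proof (intro exI[of _ "1 / M"] conjI bexI[of _ q0] ballI)
    show "1 / M > 0" "\<psi> q0 > 0" "F q0 = 1 / M * \<psi> q0"
      using \<open>M > 0\<close> \<open>F q0 > 0\<close> by (auto simp: M_def field_simps zero_less_divide_iff)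
    show "1 / M * \<psi> q \<le> F q" if "q \<in> K" for q
      using max that F_pos \<open>M > 0\<close> by (auto simp: M_def[symmetric] field_simps)
  qed (use \<open>q0 \<in> K\<close> in simp)
qed

text \<open>The left-hand side is \<phi>'' - z \<phi>'/2 + \<phi> for \<phi>(z) = (z^2 - c^2)(d - z).\<close>

lemma cubic_profile_supersolution:
  fixes c d z :: real
  assumes "0 \<le> z" "d * (2 - c\<^sup>2) > 8"
  shows "(2*d - 6*z) - z * (2*d*z - 3*z\<^sup>2 + c\<^sup>2) / 2 + (z\<^sup>2 - c\<^sup>2) * (d - z) > 0"
proof -
  have "(2*d - 6*z) - z * (2*d*z - 3*z\<^sup>2 + c\<^sup>2) / 2 + (z\<^sup>2 - c\<^sup>2) * (d - z)
      = (z - 2)\<^sup>2 * (z + 4) / 2 + c\<^sup>2 * z / 2 + (d * (2 - c\<^sup>2) - 8)"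
    by (simp add: power2_eq_square field_simps)
  moreover have "(z - 2)\<^sup>2 * (z + 4) \<ge> 0" "c\<^sup>2 * z \<ge> 0"
    using assms(1) by simp_all
  ultimately show ?thesis
    using assms(2) by linarith
qed

lemma cubic_profile_derivatives:
  fixes t c d :: real
  shows "((\<lambda>z. t * ((z\<^sup>2 - c\<^sup>2) * (d - z))) has_real_derivative t * (2*d*z - 3*z\<^sup>2 + c\<^sup>2)) (at z)"
    and "((\<lambda>z. t * (2*d*z - 3*z\<^sup>2 + c\<^sup>2)) has_real_derivative t * (2*d - 6*z)) (at z)"
  by (auto intro!: derivative_eq_intros simp: power2_eq_square algebra_simps)

lemma cyl_strip_touching_cubic:
  fixes u :: "'a::euclidean_space \<times> real \<Rightarrow> real" and c d :: real
  defines "K \<equiv> {q \<in> (cyl :: ('a \<times> real) set). c \<le> snd q \<and> snd q \<le> d}"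
  assumes "0 \<le> c" "c < d" "continuous_on K u" "\<forall>q\<in>K. u q > 0"
  shows "\<exists>t>0. \<exists>qs\<in>cyl. c < snd qs \<and> snd qs < d \<and> u qs = t * (((snd qs)\<^sup>2 - c\<^sup>2) * (d - snd qs)) \<and>
           (\<forall>q\<in>cyl. c < snd q \<and> snd q < d \<longrightarrow> t * (((snd q)\<^sup>2 - c\<^sup>2) * (d - snd q)) \<le> u q)"
proof -
  define \<phi> where "\<phi> z = (z\<^sup>2 - c\<^sup>2) * (d - z)" for z
  have "compact K"
    using compact_cyl_strip by (simp add: K_def)
  have cont_\<phi>: "continuous_on K (\<lambda>q. \<phi> (snd q))"
    by (simp add: \<phi>_def continuous_intros)
  obtain e :: 'a where "e \<in> Basis"
    using nonempty_Basis by blast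
  then have q1: "(cyl_rad TYPE('a) *\<^sub>R e, (c + d) / 2) \<in> K"
    using \<open>c < d\<close> by (simp add: K_def mem_cyl_iff cyl_rad_def)
  have "\<phi> ((c + d) / 2) > 0"
    using \<open>0 \<le> c\<close> \<open>c < d\<close> by (simp add: \<phi>_def power_strict_mono)
  then obtain t qs where "t > 0" "qs \<in> K" "\<phi> (snd qs) > 0" "u qs = t * \<phi> (snd qs)"
    and below: "\<forall>q\<in>K. t * \<phi> (snd q) \<le> u q"
    using exists_largest_multiple_below[OF \<open>compact K\<close> assms(4) cont_\<phi> assms(5) q1] by auto
  moreover have "c < snd qs" "snd qs < d"
    using \<open>qs \<in> K\<close> \<open>\<phi> (snd qs) > 0\<close> by (auto simp: K_def \<phi>_def order.order_iff_strict)
  moreover have "\<forall>q\<in>cyl. c < snd q \<and> snd q < d \<longrightarrow> t * \<phi> (snd q) \<le> u q"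
    using below by (auto simp: K_def)
  ultimately show ?thesis
    unfolding \<phi>_def using \<open>qs \<in> K\<close> by (auto simp: K_def)
qed

lemma cyl_strip_unstable:
  fixes \<Omega> :: "('a::euclidean_space \<times> real) set" and c d :: real
  assumes dim: "DIM('a) \<ge> 2" and "open (cyl_cone \<Omega>)"
    and strip: "{q \<in> cyl. c \<le> snd q \<and> snd q \<le> d} \<subseteq> \<Omega>"
    and "0 \<le> c" "c < d" "d * (2 - c\<^sup>2) > 8"
  shows "\<not> stable_region \<Omega>"
proof
  assume "stable_region \<Omega>"
  then obtain u where C2: "C2_on (cyl_cone \<Omega>) (cyl_ext u)"
    and sol: "\<forall>p\<in>\<Omega>. u p > 0 \<and> stab_op u p = 0"
    unfolding stable_region_def by blast
  define K where "K = {q \<in> (cyl :: ('a \<times> real) set). c \<le> snd q \<and> snd q \<le> d}"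
  have K_cone: "K \<subseteq> cyl_cone \<Omega>"
    using cyl_cone_memI[OF dim] strip by (auto simp: K_def)
  have "continuous_on K (cyl_ext u)"
    using C2 K_cone differentiable_imp_continuous_on continuous_on_subset
    unfolding C2_on_def by blast
  moreover have "continuous_on K (cyl_ext u) \<longleftrightarrow> continuous_on K u"
    by (intro continuous_on_cong) (auto simp: K_def cyl_ext_eq)
  ultimately have "continuous_on K u"
    by simp
  moreover have "\<forall>q\<in>K. u q > 0"
    using sol strip by (auto simp: K_def)
  ultimately obtain t qs where "t > 0" "qs \<in> cyl" and qs_strip: "c < snd qs" "snd qs < d"
    and touch: "u qs = t * (((snd qs)\<^sup>2 - c\<^sup>2) * (d - snd qs))"
    and below: "\<forall>q\<in>cyl. c < snd q \<and> snd q < d \<longrightarrow> t * (((snd q)\<^sup>2 - c\<^sup>2) * (d - snd q)) \<le> u q"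
    using cyl_strip_touching_cubic[OF \<open>0 \<le> c\<close> \<open>c < d\<close>, of u] unfolding K_def by blast
  define \<psi> where "\<psi> z = t * ((z\<^sup>2 - c\<^sup>2) * (d - z))" for z
  define \<psi>1 where "\<psi>1 z = t * (2*d*z - 3*z\<^sup>2 + c\<^sup>2)" for z
  define \<psi>2 where "\<psi>2 z = t * (2*d - 6*z)" for z
  note \<psi>_derivs = cubic_profile_derivatives[where t=t and c=c and d=d, folded \<psi>_def \<psi>1_def \<psi>2_def]
  have "\<forall>q\<in>cyl. snd q \<in> {c<..<d} \<longrightarrow> u qs - \<psi> (snd qs) \<le> u q - \<psi> (snd q)"
    using below touch by (simp add: \<psi>_def)
  then obtain \<epsilon> where "\<epsilon> > 0"
    and min: "\<forall>q\<in>ball qs \<epsilon>. cyl_ext u qs - \<psi> (snd qs) \<le> cyl_ext u q - \<psi> (snd q)"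
    using cyl_ext_local_min[OF dim open_greaterThanLessThan \<open>qs \<in> cyl\<close>, of c d u \<psi>] qs_strip by auto
  have "qs \<in> cyl_cone \<Omega>"
    using K_cone \<open>qs \<in> cyl\<close> qs_strip by (auto simp: K_def)
  define z0 where "z0 = snd qs"
  have "\<psi>2 z0 - z0 * \<psi>1 z0 / 2 + u qs \<le> stab_op u qs"
    using stab_op_ge_at_local_min[OF dim \<open>open (cyl_cone \<Omega>)\<close> \<open>qs \<in> cyl_cone \<Omega>\<close> C2 \<open>\<epsilon> > 0\<close>
        min \<psi>_derivs]
    by (simp add: z0_def)
  also have "stab_op u qs = 0"
    using sol strip \<open>qs \<in> cyl\<close> qs_strip by auto
  finally have "t * ((2*d - 6*z0) - z0 * (2*d*z0 - 3*z0\<^sup>2 + c\<^sup>2) / 2 + (z0\<^sup>2 - c\<^sup>2) * (d - z0)) \<le> 0"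
    using touch by (simp add: \<psi>1_def \<psi>2_def z0_def algebra_simps)
  moreover have "(2*d - 6*z0) - z0 * (2*d*z0 - 3*z0\<^sup>2 + c\<^sup>2) / 2 + (z0\<^sup>2 - c\<^sup>2) * (d - z0) > 0"
    using cubic_profile_supersolution qs_strip \<open>0 \<le> c\<close> \<open>d * (2 - c\<^sup>2) > 8\<close> by (simp add: z0_def)
  ultimately show False
    using \<open>t > 0\<close> by (simp add: mult_le_0_iff)
qed

lemma open_cyl_cone_snd:
  assumes "DIM('a::euclidean_space) \<ge> 2" "open {z. P z}"
  shows "open (cyl_cone {p \<in> (cyl :: ('a \<times> real) set). P (snd p)})"
proof -
  have "cyl_cone {p \<in> (cyl :: ('a \<times> real) set). P (snd p)} = {y. y \<noteq> 0} \<times> {z. P z}"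
    using cyl_rad_pos[OF assms(1)] by (auto simp: cyl_cone_def mem_cyl_iff)
  then show ?thesis
    using assms(2) by (simp add: open_Times open_Collect_neq)
qed

lemma exists_cubic_profile_parameters:
  fixes a :: real
  assumes "0 \<le> a" "a < sqrt 2"
  shows "\<exists>c d. a < c \<and> c < d \<and> d * (2 - c\<^sup>2) > 8"
proof -
  define c where "c = (a + sqrt 2) / 2"
  have c: "a < c" "0 \<le> c" "c < sqrt 2"
    using assms by (auto simp: c_def)
  then have "c\<^sup>2 < 2"
    using real_sqrt_less_iff[of "c\<^sup>2" 2] by simp
  define d where "d = 8 / (2 - c\<^sup>2) + c + 1"
  have "c < d"
    using \<open>c\<^sup>2 < 2\<close> by (simp add: d_def add_pos_pos)
  have "d * (2 - c\<^sup>2) = 8 + (c + 1) * (2 - c\<^sup>2)"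
    using \<open>c\<^sup>2 < 2\<close> by (simp add: d_def field_simps)
  then have "d * (2 - c\<^sup>2) > 8"
    using c \<open>c\<^sup>2 < 2\<close> by simp
  with \<open>a < c\<close> \<open>c < d\<close> show ?thesis
    by blast
qed

theorem proposition4p9:
  fixes a :: real
  assumes "DIM('a::euclidean_space) \<ge> 2"
    and "0 \<le> a" and "a < sqrt 2"
  shows "\<not> stable_region {p \<in> (cyl :: ('a \<times> real) set). snd p > a} \<and>
         (\<exists>ba > a. \<forall>b > ba. \<not> stable_region {p \<in> (cyl :: ('a \<times> real) set). a < snd p \<and> snd p < b})"
proof -
  obtain c d where "a < c" "c < d" "d * (2 - c\<^sup>2) > 8"
    using exists_cubic_profile_parameters[OF assms(2,3)] by blast
  have unstable: "\<not> stable_region {p \<in> (cyl :: ('a \<times> real) set). P (snd p)}"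
    if "open {z. P z}" "\<And>z. c \<le> z \<Longrightarrow> z \<le> d \<Longrightarrow> P z" for P
    by (rule cyl_strip_unstable[OF assms(1) open_cyl_cone_snd[OF assms(1) that(1)]])
      (use that(2) assms(2) \<open>a < c\<close> \<open>c < d\<close> \<open>d * (2 - c\<^sup>2) > 8\<close> in auto)
  have "\<not> stable_region {p \<in> (cyl :: ('a \<times> real) set). snd p > a}"
    using \<open>a < c\<close> by (intro unstable open_Collect_less continuous_intros) auto
  moreover have "\<not> stable_region {p \<in> (cyl :: ('a \<times> real) set). a < snd p \<and> snd p < b}"
    if "b > d" for b
    using \<open>a < c\<close> \<open>c < d\<close> that
    by (intro unstable open_Collect_conj open_Collect_less continuous_intros) auto
  ultimately show ?thesis
    using \<open>a < c\<close> \<open>c < d\<close> by (meson order.strict_trans)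
qed

end
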